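(* Let $G$ be a finite simple graph with $G\in\mathcal{F}_3$. Then $crx_3(G)=3$ if and only if $G$ is isomorphic to $K_3$ or $K_4$.
   Context: An edge-coloured cycle is rainbow if all its edges have distinct colours. For $k\ge 1$, $\mathcal{F}_k$ is the family of graphs in which any $k$ vertices lie on a common cycle. For $G\in\mathcal{F}_k$, a $k$-rainbow cycle colouring of $G$ is an edge-colouring such that any $k$ vertices of $G$ lie on a common rainbow cycle; $crx_k(G)$ is the minimum number of colours in a $k$-rainbow cycle colouring of $G$. *)

theory Defs
  imports Main
begin

definition simple_graph :: "'a set \<Rightarrow> 'a set set \<Rightarrow> bool" where
  "simple_graph V E \<longleftrightarrow> finite V \<and> (\<forall>e\<in>E. e \<subseteq> V \<and> card e = 2)"

definition is_cycle :: "'a set \<Rightarrow> 'a set set \<Rightarrow> 'a list \<Rightarrow> bool" where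
  "is_cycle V E vs \<longleftrightarrow> length vs \<ge> 3 \<and> distinct vs \<and> set vs \<subseteq> V \<and>
     (\<forall>i < length vs. {vs ! i, vs ! ((i + 1) mod length vs)} \<in> E)"

definition cycle_edges :: "'a list \<Rightarrow> 'a set set" where
  "cycle_edges vs = {{vs ! i, vs ! ((i + 1) mod length vs)} | i. i < length vs}"

definition rainbow :: "('a set \<Rightarrow> 'c) \<Rightarrow> 'a list \<Rightarrow> bool" where
  "rainbow c vs \<longleftrightarrow> inj_on c (cycle_edges vs)"

definition in_F :: "nat \<Rightarrow> 'a set \<Rightarrow> 'a set set \<Rightarrow> bool" where
  "in_F k V E \<longleftrightarrow> (\<forall>S \<subseteq> V. card S = k \<longrightarrow> (\<exists>vs. is_cycle V E vs \<and> S \<subseteq> set vs))"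

definition rainbow_cycle_colouring ::
  "nat \<Rightarrow> 'a set \<Rightarrow> 'a set set \<Rightarrow> ('a set \<Rightarrow> nat) \<Rightarrow> bool" where
  "rainbow_cycle_colouring k V E c \<longleftrightarrow>
     (\<forall>S \<subseteq> V. card S = k \<longrightarrow> (\<exists>vs. is_cycle V E vs \<and> S \<subseteq> set vs \<and> rainbow c vs))"

definition crx :: "nat \<Rightarrow> 'a set \<Rightarrow> 'a set set \<Rightarrow> nat" where
  "crx k V E = (LEAST n. \<exists>c. rainbow_cycle_colouring k V E c \<and> card (c ` E) = n)"

definition complete_edges :: "nat \<Rightarrow> nat set set" where
  "complete_edges n = {{i, j} | i j. i < n \<and> j < n \<and> i \<noteq> j}"

definition graph_iso :: "'a set \<Rightarrow> 'a set set \<Rightarrow> 'b set \<Rightarrow> 'b set set \<Rightarrow> bool" where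
  "graph_iso V E V' E' \<longleftrightarrow>
     (\<exists>f. bij_betw f V V' \<and> (\<forall>u\<in>V. \<forall>v\<in>V. {u, v} \<in> E \<longleftrightarrow> {f u, f v} \<in> E'))"

end

theory Submission
  imports Defs
begin

text \<open>
  A rainbow cycle uses as many colours as it has edges, so with only three colours every rainbow
  cycle through three given vertices is a triangle on exactly those vertices. Hence any three
  vertices span a rainbow triangle: the graph is complete and the colouring is proper, so every
  vertex has degree at most 3 and there are at most four vertices. Conversely, \<open>K\<^sub>4\<close> splits
  into three perfect matchings; colouring them differently makes every triangle of \<open>K\<^sub>3\<close> and
  \<open>K\<^sub>4\<close> rainbow, while no rainbow cycle has fewer than three colours.
\<close>

definition complete_graph :: "'a set \<Rightarrow> 'a set set \<Rightarrow> bool" where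
  "complete_graph V E \<longleftrightarrow> (\<forall>u\<in>V. \<forall>v\<in>V. u \<noteq> v \<longrightarrow> {u, v} \<in> E)"

definition proper_edge_colouring :: "'a set \<Rightarrow> ('a set \<Rightarrow> 'c) \<Rightarrow> bool" where
  "proper_edge_colouring V c \<longleftrightarrow>
     (\<forall>u\<in>V. \<forall>v\<in>V. \<forall>w\<in>V. u \<noteq> v \<longrightarrow> u \<noteq> w \<longrightarrow> v \<noteq> w \<longrightarrow> c {u, v} \<noteq> c {u, w})"

lemma proper_edge_colouringD:
  assumes "proper_edge_colouring V c" "{u, v, w} \<subseteq> V" "distinct [u, v, w]"
  shows "c {u, v} \<noteq> c {u, w}"
  using assms unfolding proper_edge_colouring_def by simp

lemma cycle_edges_subset: "is_cycle V E vs \<Longrightarrow> cycle_edges vs \<subseteq> E"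
  by (auto simp: cycle_edges_def is_cycle_def)

lemma cycle_edges_eq_image:
  "cycle_edges vs = (\<lambda>i. {vs ! i, vs ! ((i + 1) mod length vs)}) ` {..<length vs}"
  by (auto simp: cycle_edges_def)

lemma mutual_successors_mod:
  fixes i j n :: nat
  assumes "3 \<le> n" "i < n" "i = Suc j mod n" "j = Suc i mod n"
  shows False
proof -
  have "Suc (Suc i) mod n = i"
    using assms(3,4) by (metis mod_Suc_eq)
  moreover have "Suc (Suc i) < n \<or> Suc (Suc i) = n \<or> Suc (Suc i) = n + 1"
    using assms(2) by linarith
  ultimately show False
    using assms(1) by (elim disjE) (auto simp: mod_Suc)
qed

lemma card_cycle_edges:
  assumes "is_cycle V E vs"
  shows "card (cycle_edges vs) = length vs"
proof -
  let ?n = "length vs"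
  have n: "3 \<le> ?n" and d: "distinct vs"
    using assms by (auto simp: is_cycle_def)
  have "inj_on (\<lambda>i. {vs ! i, vs ! ((i + 1) mod ?n)}) {..<?n}"
  proof (rule inj_onI)
    fix i j
    assume i: "i \<in> {..<?n}" and j: "j \<in> {..<?n}"
      and eq: "{vs ! i, vs ! ((i + 1) mod ?n)} = {vs ! j, vs ! ((j + 1) mod ?n)}"
    have "(i + 1) mod ?n < ?n" "(j + 1) mod ?n < ?n"
      using n by (intro mod_less_divisor; linarith)+
    moreover from eq have "vs ! i = vs ! j \<or>
        (vs ! i = vs ! ((j + 1) mod ?n) \<and> vs ! ((i + 1) mod ?n) = vs ! j)"
      unfolding doubleton_eq_iff by blast
    ultimately have "i = j \<or> (i = (j + 1) mod ?n \<and> j = (i + 1) mod ?n)"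
      using i j by (auto simp: nth_eq_iff_index_eq[OF d])
    then show "i = j"
      using mutual_successors_mod[OF n, of i j] i unfolding Suc_eq_plus1 lessThan_iff by blast
  qed
  then show ?thesis
    by (simp add: cycle_edges_eq_image card_image)
qed

lemma rainbow_cycle_length_le_card_colours:
  assumes "is_cycle V E vs" "rainbow c vs" "finite E"
  shows "length vs \<le> card (c ` E)"
proof -
  have "length vs = card (c ` cycle_edges vs)"
    using assms(2) card_cycle_edges[OF assms(1)] by (simp add: rainbow_def card_image)
  also have "\<dots> \<le> card (c ` E)"
    using cycle_edges_subset[OF assms(1)] assms(3) by (intro card_mono) auto
  finally show ?thesis .
qed

lemma cycle_edges_triangle: "cycle_edges [x, y, z] = {{x, y}, {y, z}, {z, x}}"
proof -
  have "{..<length [x, y, z]} = {0, 1, 2}"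
    by auto
  then show ?thesis
    by (simp add: cycle_edges_eq_image)
qed

lemma edge_of_triangle:
  assumes "length vs = 3" "p \<in> set vs" "q \<in> set vs" "p \<noteq> q"
  shows "{p, q} \<in> cycle_edges vs"
proof -
  obtain x y z where "vs = [x, y, z]"
    using assms(1) by (auto simp: numeral_3_eq_3 length_Suc_conv)
  then show ?thesis
    using assms(2-4) by (auto simp: cycle_edges_triangle insert_commute)
qed

lemma all_less_3: "(\<forall>i<3. P i) \<longleftrightarrow> P 0 \<and> P 1 \<and> P (2 :: nat)"
  by (auto simp: numeral_3_eq_3 numeral_2_eq_2 less_Suc_eq)

lemma is_cycle_triangle_iff:
  "is_cycle V E [x, y, z] \<longleftrightarrow>
     distinct [x, y, z] \<and> {x, y, z} \<subseteq> V \<and> {x, y} \<in> E \<and> {y, z} \<in> E \<and> {z, x} \<in> E"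
proof -
  have "length [x, y, z] = 3"
    by simp
  then show ?thesis
    unfolding is_cycle_def by (simp only: all_less_3) simp
qed

lemma rainbow_triangle_iff:
  assumes "distinct [x, y, z]"
  shows "rainbow c [x, y, z] \<longleftrightarrow> c {x, y} \<noteq> c {y, z} \<and> c {y, z} \<noteq> c {z, x} \<and> c {z, x} \<noteq> c {x, y}"
  using assms by (auto simp: rainbow_def cycle_edges_triangle inj_on_def doubleton_eq_iff)

lemma rainbow_cycle_colouring_3_if_proper:
  assumes "complete_graph V E" "proper_edge_colouring V c"
  shows "rainbow_cycle_colouring 3 V E c"
  unfolding rainbow_cycle_colouring_def
proof (intro allI impI)
  fix S
  assume "S \<subseteq> V" "card S = 3"
  then obtain x y z where S: "S = {x, y, z}" "distinct [x, y, z]" "{x, y, z} \<subseteq> V"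
    by (auto simp: card_3_iff)
  have cycle: "is_cycle V E [x, y, z]"
    using S(2,3) assms(1) by (auto simp: is_cycle_triangle_iff complete_graph_def)
  have "c {y, x} \<noteq> c {y, z}" "c {z, y} \<noteq> c {z, x}" "c {x, z} \<noteq> c {x, y}"
    using S(2,3) proper_edge_colouringD[OF assms(2), of y x z]
      proper_edge_colouringD[OF assms(2), of z y x] proper_edge_colouringD[OF assms(2), of x z y]
    by auto
  moreover have "{y, x} = {x, y}" "{z, y} = {y, z}" "{x, z} = {z, x}"
    by auto
  ultimately have "rainbow c [x, y, z]"
    using S(2) by (simp add: rainbow_triangle_iff)
  with cycle show "\<exists>vs. is_cycle V E vs \<and> S \<subseteq> set vs \<and> rainbow c vs"
    using S(1) by (intro exI[of _ "[x, y, z]"]) auto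
qed

lemma rainbow_triangles_if_three_colours:
  assumes "rainbow_cycle_colouring 3 V E c" "finite E" "card (c ` E) \<le> 3"
    and "{x, y, z} \<subseteq> V" "distinct [x, y, z]"
  shows "{x, y} \<in> E \<and> c {x, y} \<noteq> c {x, z}"
proof -
  have "card {x, y, z} = 3"
    using assms(5) by simp
  then obtain vs where vs: "is_cycle V E vs" "{x, y, z} \<subseteq> set vs" "rainbow c vs"
    using assms(1,4) unfolding rainbow_cycle_colouring_def by blast
  have "length vs = 3"
    using rainbow_cycle_length_le_card_colours[OF vs(1,3) assms(2)] assms(3) vs(1)
    by (simp add: is_cycle_def)
  then have "{x, y} \<in> cycle_edges vs" "{x, z} \<in> cycle_edges vs"
    using vs(2) assms(5) by (auto intro: edge_of_triangle)
  moreover have "{x, y} \<noteq> {x, z}"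
    using assms(5) by (auto simp: doubleton_eq_iff)
  ultimately show ?thesis
    using cycle_edges_subset[OF vs(1)] vs(3) unfolding rainbow_def inj_on_def by blast
qed

lemma proper_edge_colouring_if_three_colours:
  assumes "rainbow_cycle_colouring 3 V E c" "finite E" "card (c ` E) \<le> 3"
  shows "proper_edge_colouring V c"
  using rainbow_triangles_if_three_colours[OF assms]
  unfolding proper_edge_colouring_def by auto

lemma complete_graph_if_three_colours:
  assumes "rainbow_cycle_colouring 3 V E c" "finite E" "card (c ` E) \<le> 3" "3 \<le> card V"
  shows "complete_graph V E"
  unfolding complete_graph_def
proof (intro ballI impI)
  fix u v
  assume uv: "u \<in> V" "v \<in> V" "u \<noteq> v"
  have "\<not> V \<subseteq> {u, v}"
  proof
    assume "V \<subseteq> {u, v}"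
    then have "card V \<le> card {u, v}"
      by (intro card_mono) auto
    also have "\<dots> \<le> 2"
      by (simp add: card_insert_le_m1)
    finally show False
      using assms(4) by simp
  qed
  then obtain w where "w \<in> V" "w \<noteq> u" "w \<noteq> v"
    by blast
  with uv show "{u, v} \<in> E"
    using rainbow_triangles_if_three_colours[OF assms(1-3), of u v w] by simp
qed

lemma card_le_Suc_card_colours_if_proper:
  assumes "complete_graph V E" "proper_edge_colouring V c" "finite E"
  shows "card V \<le> Suc (card (c ` E))"
proof (cases "V = {}")
  case False
  then obtain u where u: "u \<in> V"
    by blast
  have "inj_on (\<lambda>v. c {u, v}) (V - {u})"
  proof (rule inj_onI)
    fix v w
    assume "v \<in> V - {u}" "w \<in> V - {u}" "c {u, v} = c {u, w}"
    with proper_edge_colouringD[OF assms(2), of u v w] u show "v = w"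
      by auto
  qed
  then have "card (V - {u}) \<le> card (c ` E)"
    using assms(1,3) u by (intro card_inj_on_le) (auto simp: complete_graph_def)
  then show ?thesis
    using u by (simp add: card_Diff_singleton_if)
qed simp

lemma proper_edge_colouring_image:
  assumes "proper_edge_colouring W c" "inj_on f V" "f ` V \<subseteq> W"
  shows "proper_edge_colouring V (\<lambda>e. c (f ` e))"
  unfolding proper_edge_colouring_def
proof (intro ballI impI)
  fix u v w
  assume "u \<in> V" "v \<in> V" "w \<in> V" "u \<noteq> v" "u \<noteq> w" "v \<noteq> w"
  with assms(2,3) have "{f u, f v, f w} \<subseteq> W" "f u \<noteq> f v" "f u \<noteq> f w" "f v \<noteq> f w"
    by (auto dest: inj_onD)
  with assms(1) show "c (f ` {u, v}) \<noteq> c (f ` {u, w})"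
    unfolding proper_edge_colouring_def by simp
qed

definition K4_colouring :: "nat set \<Rightarrow> nat" where
  "K4_colouring e =
     (if e = {0, 1} \<or> e = {2, 3} then 0 else if e = {0, 2} \<or> e = {1, 3} then 1 else 2)"

lemma proper_K4_colouring: "proper_edge_colouring {..<4} K4_colouring"
proof -
  have "{..<4} = {0, 1, 2, 3 :: nat}"
    by auto
  then show ?thesis
    by (simp add: proper_edge_colouring_def K4_colouring_def doubleton_eq_iff)
qed

lemma proper_3_colouring_if_card_le_4:
  assumes "finite V" "card V \<le> 4"
  obtains c :: "'a set \<Rightarrow> nat" where "proper_edge_colouring V c" "\<forall>e. c e < 3"
proof -
  obtain f :: "'a \<Rightarrow> nat" where "f ` V \<subseteq> {..<4}" "inj_on f V"
    using card_le_inj[OF assms(1), of "{..<4 :: nat}"] assms(2) by auto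
  then have "proper_edge_colouring V (\<lambda>e. K4_colouring (f ` e))"
    by (intro proper_edge_colouring_image[OF proper_K4_colouring])
  moreover have "\<forall>e. K4_colouring (f ` e) < 3"
    by (auto simp: K4_colouring_def)
  ultimately show ?thesis
    using that by blast
qed

lemma mem_complete_edges_iff:
  assumes "i < n" "j < n"
  shows "{i, j} \<in> complete_edges n \<longleftrightarrow> i \<noteq> j"
  using assms by (auto simp: complete_edges_def doubleton_eq_iff)

lemma graph_iso_complete_edges_iff:
  assumes "simple_graph V E"
  shows "graph_iso V E {0..<n} (complete_edges n) \<longleftrightarrow> complete_graph V E \<and> card V = n"
proof
  assume "graph_iso V E {0..<n} (complete_edges n)"
  then obtain f where f: "bij_betw f V {0..<n}"
    and edges: "\<forall>u\<in>V. \<forall>v\<in>V. {u, v} \<in> E \<longleftrightarrow> {f u, f v} \<in> complete_edges n"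
    unfolding graph_iso_def by blast
  have "complete_graph V E"
    unfolding complete_graph_def
  proof (intro ballI impI)
    fix u v
    assume "u \<in> V" "v \<in> V" "u \<noteq> v"
    moreover from this have "f u \<noteq> f v" "f u < n" "f v < n"
      using f by (auto simp: bij_betw_def inj_on_def)
    ultimately show "{u, v} \<in> E"
      using edges mem_complete_edges_iff by blast
  qed
  then show "complete_graph V E \<and> card V = n"
    using bij_betw_same_card[OF f] by simp
next
  assume "complete_graph V E \<and> card V = n"
  then have complete: "complete_graph V E" and card: "card V = n"
    by blast+
  obtain f where f: "bij_betw f V {0..<n}"
    using ex_bij_betw_finite_nat assms card by (metis simple_graph_def)
  have "{u, v} \<in> E \<longleftrightarrow> {f u, f v} \<in> complete_edges n" if "u \<in> V" "v \<in> V" for u v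
  proof -
    have "{u, v} \<in> E \<longleftrightarrow> u \<noteq> v"
      using assms complete that by (auto simp: simple_graph_def complete_graph_def)
    also have "\<dots> \<longleftrightarrow> f u \<noteq> f v"
      using f that by (auto simp: bij_betw_def inj_on_def)
    also have "\<dots> \<longleftrightarrow> {f u, f v} \<in> complete_edges n"
      using f that by (intro mem_complete_edges_iff[symmetric]) (auto simp: bij_betw_def)
    finally show ?thesis .
  qed
  then show "graph_iso V E {0..<n} (complete_edges n)"
    using f unfolding graph_iso_def by blast
qed

lemma rainbow_cycle_colouring_if_inj:
  assumes "in_F k V E" "inj_on c E"
  shows "rainbow_cycle_colouring k V E c"
  unfolding rainbow_cycle_colouring_def
proof (intro allI impI)
  fix S
  assume "S \<subseteq> V" "card S = k"
  then obtain vs where vs: "is_cycle V E vs" "S \<subseteq> set vs"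
    using assms(1) unfolding in_F_def by blast
  have "rainbow c vs"
    unfolding rainbow_def using assms(2) cycle_edges_subset[OF vs(1)] by (rule inj_on_subset)
  with vs show "\<exists>vs. is_cycle V E vs \<and> S \<subseteq> set vs \<and> rainbow c vs"
    by blast
qed

lemma rainbow_cycle_colouring_if_card_less:
  assumes "finite V" "card V < k"
  shows "rainbow_cycle_colouring k V E c"
proof -
  have "card S \<noteq> k" if "S \<subseteq> V" for S
    using card_mono[OF assms(1) that] assms(2) by simp
  then show ?thesis
    unfolding rainbow_cycle_colouring_def by blast
qed

lemma crx_le_card_colours: "rainbow_cycle_colouring k V E c \<Longrightarrow> crx k V E \<le> card (c ` E)"
  unfolding crx_def by (rule Least_le) blast

lemma crx_attained:
  assumes "in_F k V E" "finite E"
  obtains c where "rainbow_cycle_colouring k V E c" "card (c ` E) = crx k V E"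
proof -
  obtain h :: "'a set \<Rightarrow> nat" where "inj_on h E"
    using finite_imp_inj_to_nat_seg[OF assms(2)] by blast
  then have "\<exists>n c. rainbow_cycle_colouring k V E c \<and> card (c ` E) = n"
    using rainbow_cycle_colouring_if_inj[OF assms(1)] by blast
  then have "\<exists>c. rainbow_cycle_colouring k V E c \<and> card (c ` E) = crx k V E"
    unfolding crx_def by (rule LeastI_ex)
  then show ?thesis
    using that by blast
qed

lemma crx_le_1_if_card_less:
  assumes "finite V" "card V < k"
  shows "crx k V E \<le> 1"
proof -
  have "crx k V E \<le> card ((\<lambda>_. 0 :: nat) ` E)"
    by (intro crx_le_card_colours rainbow_cycle_colouring_if_card_less assms)
  also have "\<dots> \<le> card {0 :: nat}"
    by (intro card_mono) auto
  finally show ?thesis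
    by simp
qed

lemma three_le_card_colours:
  assumes "rainbow_cycle_colouring k V E c" "finite V" "finite E" "k \<le> card V"
  shows "3 \<le> card (c ` E)"
proof -
  obtain S where "S \<subseteq> V" "card S = k"
    using obtain_subset_with_card_n[OF assms(4)] by blast
  then obtain vs where vs: "is_cycle V E vs" "rainbow c vs"
    using assms(1) unfolding rainbow_cycle_colouring_def by blast
  then have "3 \<le> length vs"
    by (simp add: is_cycle_def)
  also have "\<dots> \<le> card (c ` E)"
    using rainbow_cycle_length_le_card_colours[OF vs assms(3)] .
  finally show ?thesis .
qed

lemma complete_card_3_or_4_if_crx_3_eq_3:
  assumes "in_F 3 V E" "finite V" "finite E" "crx 3 V E = 3"
  shows "complete_graph V E \<and> (card V = 3 \<or> card V = 4)"
proof -
  obtain c where c: "rainbow_cycle_colouring 3 V E c" "card (c ` E) = 3"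
    using crx_attained[OF assms(1,3)] assms(4) by metis
  have card_V: "3 \<le> card V"
  proof (rule ccontr)
    assume "\<not> 3 \<le> card V"
    then have "crx 3 V E \<le> 1"
      using crx_le_1_if_card_less[OF assms(2)] by simp
    with assms(4) show False
      by simp
  qed
  have complete: "complete_graph V E"
    using complete_graph_if_three_colours[OF c(1) assms(3)] c(2) card_V by simp
  have "proper_edge_colouring V c"
    using proper_edge_colouring_if_three_colours[OF c(1) assms(3)] c(2) by simp
  then have "card V \<le> 4"
    using card_le_Suc_card_colours_if_proper[OF complete _ assms(3), of c] c(2) by simp
  with card_V complete show ?thesis
    by auto
qed

lemma crx_3_eq_3_if_complete_card_3_or_4:
  assumes "in_F 3 V E" "finite V" "finite E" "complete_graph V E" "card V = 3 \<or> card V = 4"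
  shows "crx 3 V E = 3"
proof (rule antisym)
  have "card V \<le> 4"
    using assms(5) by linarith
  then obtain c :: "'a set \<Rightarrow> nat" where c: "proper_edge_colouring V c" "\<forall>e. c e < 3"
    using proper_3_colouring_if_card_le_4[OF assms(2)] by blast
  have "crx 3 V E \<le> card (c ` E)"
    using rainbow_cycle_colouring_3_if_proper[OF assms(4) c(1)] by (rule crx_le_card_colours)
  also have "\<dots> \<le> card {..<3 :: nat}"
    using c(2) by (intro card_mono) auto
  finally show "crx 3 V E \<le> 3"
    by simp
next
  have "3 \<le> card V"
    using assms(5) by linarith
  obtain c where c: "rainbow_cycle_colouring 3 V E c" "card (c ` E) = crx 3 V E"
    using crx_attained[OF assms(1,3)] .
  show "3 \<le> crx 3 V E"
    using three_le_card_colours[OF c(1) assms(2,3) \<open>3 \<le> card V\<close>] c(2) by simp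
qed

theorem theorem6:
  fixes V :: "'a set" and E :: "'a set set"
  assumes "simple_graph V E"
    and "in_F 3 V E"
  shows "crx 3 V E = 3 \<longleftrightarrow>
           graph_iso V E {0..<3} (complete_edges 3) \<or> graph_iso V E {0..<4} (complete_edges 4)"
proof -
  have finite_V: "finite V" and "E \<subseteq> Pow V"
    using assms(1) by (auto simp: simple_graph_def)
  then have finite_E: "finite E"
    by (simp add: finite_subset)
  have "crx 3 V E = 3 \<longleftrightarrow> complete_graph V E \<and> (card V = 3 \<or> card V = 4)"
    using complete_card_3_or_4_if_crx_3_eq_3 crx_3_eq_3_if_complete_card_3_or_4 assms(2) finite_V finite_E by blast
  then show ?thesis
    using graph_iso_complete_edges_iff[OF assms(1)] by auto
qed

end
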